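(* Let $n\geq1$, $d\geq2$. For $y,v,w,z\in\mathbb Z_{\geq0}^n$ with entries of each summing to $d-1$ and $y+v=z+w$, the polynomial $$\sum_{s=1}^n\left(u_{y+e_s}u_{v+e_s}-u_{w+e_s}u_{z+e_s}\right)$$ vanishes on the odeco variety in $S^d(\mathbb C^n)$.
   Context: For $T\in S^d(\mathbb C^n)$ and $a=(a_1,\dots,a_n)\in\mathbb Z_{\geq0}^n$ with $a_1+\dots+a_n=d$, the coordinate $u_a$ is $u_a=d!\,T_{1\dots1\,2\dots2\,\dots\,n\dots n}$ where index $j$ is repeated $a_j$ times; $e_s$ is the $s$-th standard basis vector. A real tensor $T\in S^d(\mathbb R^n)$ is odeco if $T=\sum_{i=1}^n\lambda_iv_i^{\otimes d}$ with $v_1,\dots,v_n$ an orthonormal basis of $\mathbb R^n$ and $\lambda_i\in\mathbb R$; the odeco variety is the Zariski closure in $S^d(\mathbb C^n)$ of the set of odeco tensors. *)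

theory Defs
  imports Complex_Main "HOL-Library.Multiset"
begin

text \<open>Symmetric tensors in S^d(C^n): functions on index lists (indices 0..n-1,
  length d), invariant under permuting the index list, and zero off the index domain.\<close>

definition valid_index :: "nat \<Rightarrow> nat \<Rightarrow> nat list \<Rightarrow> bool" where
  "valid_index n d xs \<longleftrightarrow> length xs = d \<and> (\<forall>i\<in>set xs. i < n)"

definition sym_tensors :: "nat \<Rightarrow> nat \<Rightarrow> (nat list \<Rightarrow> complex) set" where
  "sym_tensors n d = {T. (\<forall>xs. \<not> valid_index n d xs \<longrightarrow> T xs = 0) \<and>
      (\<forall>xs ys. mset xs = mset ys \<longrightarrow> T xs = T ys)}"

inductive_set poly_fun :: "((nat list \<Rightarrow> complex) \<Rightarrow> complex) set" where
  pf_const: "(\<lambda>T. c) \<in> poly_fun"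
| pf_coord: "(\<lambda>T. T xs) \<in> poly_fun"
| pf_add: "p \<in> poly_fun \<Longrightarrow> q \<in> poly_fun \<Longrightarrow> (\<lambda>T. p T + q T) \<in> poly_fun"
| pf_mult: "p \<in> poly_fun \<Longrightarrow> q \<in> poly_fun \<Longrightarrow> (\<lambda>T. p T * q T) \<in> poly_fun"

definition zariski_closure ::
  "(nat list \<Rightarrow> complex) set \<Rightarrow> (nat list \<Rightarrow> complex) set \<Rightarrow> (nat list \<Rightarrow> complex) set" where
  "zariski_closure A S = {T \<in> A. \<forall>p \<in> poly_fun. (\<forall>X \<in> S. p X = 0) \<longrightarrow> p T = 0}"

text \<open>Odeco tensors: sum_i lambda_i v_i^{\<otimes>d} for an orthonormal basis v_0..v_{n-1} of R^n,
  viewed as complex tensors.\<close>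

definition orthonormal_basis :: "nat \<Rightarrow> (nat \<Rightarrow> nat \<Rightarrow> real) \<Rightarrow> bool" where
  "orthonormal_basis n v \<longleftrightarrow>
     (\<forall>i<n. \<forall>j<n. (\<Sum>k<n. v i k * v j k) = (if i = j then 1 else 0))"

definition odeco_tensor :: "nat \<Rightarrow> nat \<Rightarrow> (nat \<Rightarrow> real) \<Rightarrow> (nat \<Rightarrow> nat \<Rightarrow> real) \<Rightarrow> (nat list \<Rightarrow> complex)" where
  "odeco_tensor n d lam v = (\<lambda>xs. if valid_index n d xs then
       complex_of_real (\<Sum>i<n. lam i * (\<Prod>k<d. v i (xs ! k))) else 0)"

definition odeco_tensors :: "nat \<Rightarrow> nat \<Rightarrow> (nat list \<Rightarrow> complex) set" where
  "odeco_tensors n d = {odeco_tensor n d lam v | lam v. orthonormal_basis n v}"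

definition odeco_variety :: "nat \<Rightarrow> nat \<Rightarrow> (nat list \<Rightarrow> complex) set" where
  "odeco_variety n d = zariski_closure (sym_tensors n d) (odeco_tensors n d)"

text \<open>Coordinate u_a = d! T_{1..1 2..2 ... n..n} (0-based indices here).\<close>

definition index_list :: "nat \<Rightarrow> (nat \<Rightarrow> nat) \<Rightarrow> nat list" where
  "index_list n a = concat (map (\<lambda>j. replicate (a j) j) [0..<n])"

definition ucoord :: "nat \<Rightarrow> nat \<Rightarrow> (nat \<Rightarrow> nat) \<Rightarrow> (nat list \<Rightarrow> complex) \<Rightarrow> complex" where
  "ucoord n d a T = of_nat (fact d) * T (index_list n a)"

definition unit_add :: "(nat \<Rightarrow> nat) \<Rightarrow> nat \<Rightarrow> (nat \<Rightarrow> nat)" where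
  "unit_add a s = a(s := a s + 1)"

end

theory Submission imports Defs begin

text \<open>On an odeco tensor \<open>T = \<Sum>\<^sub>i \<lambda>\<^sub>i v\<^sub>i\<^sup>\<otimes>\<^sup>d\<close> the coordinate \<open>u\<^sub>a\<close> is \<open>d! \<Sum>\<^sub>i \<lambda>\<^sub>i v\<^sub>i\<^sup>a\<close>,
  so \<open>u\<^sub>a\<^sub>+\<^sub>e\<^sub>s\<close> is the \<open>s\<close>-th entry of \<open>d! \<Sum>\<^sub>i \<lambda>\<^sub>i v\<^sub>i\<^sup>a v\<^sub>i\<close>. Orthonormality of the \<open>v\<^sub>i\<close> turns
  \<open>\<Sum>\<^sub>s u\<^sub>a\<^sub>+\<^sub>e\<^sub>s u\<^sub>b\<^sub>+\<^sub>e\<^sub>s\<close> into \<open>(d!)\<^sup>2 \<Sum>\<^sub>i \<lambda>\<^sub>i\<^sup>2 v\<^sub>i\<^sup>a\<^sup>+\<^sup>b\<close>, which depends only on \<open>a + b\<close>.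
  Hence the polynomial of the theorem vanishes on all odeco tensors, and therefore on
  their Zariski closure.\<close>

lemma prod_lessThan_length_nth:
  "(\<Prod>k<length xs. f (xs ! k)) = prod_list (map (f :: _ \<Rightarrow> 'a::comm_monoid_mult) xs)"
  by (simp add: prod.list_conv_set_nth atLeast0LessThan)

lemma length_index_list: "length (index_list n a) = (\<Sum>j<n. a j)"
  by (simp add: index_list_def length_concat o_def interv_sum_list_conv_sum_set_nat
      atLeast0LessThan)

lemma set_index_list_subset: "set (index_list n a) \<subseteq> {..<n}"
  unfolding index_list_def by auto

lemma valid_index_index_list:
  "(\<Sum>j<n. a j) = d \<Longrightarrow> valid_index n d (index_list n a)"
  using length_index_list[of n a] set_index_list_subset[of n a]
  by (auto simp: valid_index_def)

lemma prod_list_map_index_list: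
  fixes f :: "nat \<Rightarrow> 'a::comm_monoid_mult"
  shows "prod_list (map f (index_list n a)) = (\<Prod>j<n. f j ^ a j)"
proof -
  have "prod_list (map f (concat xss)) = prod_list (map (\<lambda>xs. prod_list (map f xs)) xss)"
    for xss by (induct xss) auto
  then show ?thesis
    by (simp add: index_list_def o_def prod.distinct_set_conv_list[symmetric] atLeast0LessThan)
qed

lemma sum_unit_add:
  assumes "s < n"
  shows "(\<Sum>j<n. unit_add a s j) = (\<Sum>j<n. a j) + 1"
proof -
  have "(\<Sum>j<n. unit_add a s j) = (\<Sum>j<n. a j + (if j = s then 1 else 0))"
    by (rule sum.cong) (auto simp: unit_add_def)
  then show ?thesis using assms by (simp add: sum.distrib)
qed

lemma prod_power_unit_add:
  fixes f :: "nat \<Rightarrow> 'a::comm_monoid_mult"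
  assumes "s < n"
  shows "(\<Prod>j<n. f j ^ unit_add a s j) = (\<Prod>j<n. f j ^ a j) * f s"
proof -
  have "(\<Prod>j<n. f j ^ unit_add a s j) = (\<Prod>j<n. f j ^ a j * (if j = s then f j else 1))"
    by (rule prod.cong) (auto simp: unit_add_def mult.commute)
  then show ?thesis
    using assms by (simp add: prod.distrib)
qed

lemma poly_fun_diff: "p \<in> poly_fun \<Longrightarrow> q \<in> poly_fun \<Longrightarrow> (\<lambda>T. p T - q T) \<in> poly_fun"
  using pf_add[OF _ pf_mult[OF pf_const[of "-1"]], of p q] by simp

lemma poly_fun_sum:
  fixes n :: nat
  shows "(\<And>s. s < n \<Longrightarrow> f s \<in> poly_fun) \<Longrightarrow> (\<lambda>T. \<Sum>s<n. f s T) \<in> poly_fun"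
proof (induct n)
  case 0
  show ?case using pf_const[of 0] by simp
next
  case (Suc n)
  then have "(\<lambda>T. (\<Sum>s<n. f s T) + f n T) \<in> poly_fun"
    by (intro pf_add) auto
  then show ?case by (simp add: add.commute)
qed

lemma poly_fun_ucoord: "ucoord n d a \<in> poly_fun"
  using pf_mult[OF pf_const pf_coord] unfolding ucoord_def by (simp add: fun_eq_iff)

lemma zariski_closure_vanishing:
  assumes "T \<in> zariski_closure A S" "p \<in> poly_fun" "\<And>X. X \<in> S \<Longrightarrow> p X = 0"
  shows "p T = 0"
  using assms unfolding zariski_closure_def by blast

lemma orthonormal_basis_sum_mult:
  fixes A B :: "nat \<Rightarrow> real"
  assumes "orthonormal_basis n v"
  shows "(\<Sum>s<n. (\<Sum>i<n. A i * v i s) * (\<Sum>k<n. B k * v k s)) = (\<Sum>i<n. A i * B i)"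
proof -
  have "(\<Sum>s<n. (\<Sum>i<n. A i * v i s) * (\<Sum>k<n. B k * v k s))
      = (\<Sum>s<n. \<Sum>i<n. \<Sum>k<n. A i * B k * (v i s * v k s))"
    unfolding sum_product by (intro sum.cong refl) (simp only: mult_ac)
  also have "\<dots> = (\<Sum>i<n. \<Sum>k<n. \<Sum>s<n. A i * B k * (v i s * v k s))"
    by (subst sum.swap) (intro sum.cong refl sum.swap)
  also have "\<dots> = (\<Sum>i<n. \<Sum>k<n. if i = k then A i * B k else 0)"
    using assms by (intro sum.cong refl) (simp add: orthonormal_basis_def flip: sum_distrib_left)
  also have "\<dots> = (\<Sum>i<n. A i * B i)"
    by simp
  finally show ?thesis .
qed

lemma odeco_tensor_index_list:
  assumes "(\<Sum>j<n. a j) = d"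
  shows "odeco_tensor n d lam v (index_list n a) = of_real (\<Sum>i<n. lam i * (\<Prod>j<n. v i j ^ a j))"
proof -
  have "(\<Prod>k<d. v i (index_list n a ! k)) = (\<Prod>j<n. v i j ^ a j)" for i
    using prod_lessThan_length_nth[of "v i" "index_list n a"]
      prod_list_map_index_list[of "v i" n a] length_index_list[of n a] assms
    by simp
  then show ?thesis
    using valid_index_index_list[OF assms] by (simp add: odeco_tensor_def)
qed

lemma ucoord_unit_add_odeco_tensor:
  assumes "(\<Sum>j<n. a j) = d - 1" "d \<ge> 1" "s < n"
  shows "ucoord n d (unit_add a s) (odeco_tensor n d lam v)
    = fact d * of_real (\<Sum>i<n. lam i * (\<Prod>j<n. v i j ^ a j) * v i s)"
proof -
  have "(\<Sum>j<n. unit_add a s j) = d"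
    using sum_unit_add[OF assms(3)] assms(1,2) by simp
  then show ?thesis
    by (simp add: ucoord_def odeco_tensor_index_list prod_power_unit_add[OF assms(3)] mult.assoc)
qed

lemma sum_ucoord_unit_add_odeco_tensor:
  assumes "orthonormal_basis n v" "d \<ge> 1"
    and "(\<Sum>j<n. a j) = d - 1" "(\<Sum>j<n. b j) = d - 1"
  shows "(\<Sum>s<n. ucoord n d (unit_add a s) (odeco_tensor n d lam v)
                 * ucoord n d (unit_add b s) (odeco_tensor n d lam v))
    = fact d ^ 2 * of_real (\<Sum>i<n. lam i ^ 2 * (\<Prod>j<n. v i j ^ (a j + b j)))"
proof -
  let ?A = "\<lambda>i. lam i * (\<Prod>j<n. v i j ^ a j)" and ?B = "\<lambda>i. lam i * (\<Prod>j<n. v i j ^ b j)"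
  have "(\<Sum>s<n. ucoord n d (unit_add a s) (odeco_tensor n d lam v)
                 * ucoord n d (unit_add b s) (odeco_tensor n d lam v))
      = fact d ^ 2 * of_real (\<Sum>s<n. (\<Sum>i<n. ?A i * v i s) * (\<Sum>k<n. ?B k * v k s))"
    using assms by (simp add: ucoord_unit_add_odeco_tensor sum_distrib_left power2_eq_square mult_ac)
  also have "\<dots> = fact d ^ 2 * of_real (\<Sum>i<n. ?A i * ?B i)"
    using orthonormal_basis_sum_mult[OF assms(1)] by simp
  also have "(\<Sum>i<n. ?A i * ?B i) = (\<Sum>i<n. lam i ^ 2 * (\<Prod>j<n. v i j ^ (a j + b j)))"
    by (simp add: power_add prod.distrib power2_eq_square mult_ac)
  finally show ?thesis .
qed

theorem lemma3p5:
  fixes n d :: nat and y v w z :: "nat \<Rightarrow> nat"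
  assumes "n \<ge> 1" and "d \<ge> 2"
    and "(\<Sum>i<n. y i) = d - 1" and "(\<Sum>i<n. v i) = d - 1"
    and "(\<Sum>i<n. w i) = d - 1" and "(\<Sum>i<n. z i) = d - 1"
    and "\<forall>i<n. y i + v i = z i + w i"
  shows "\<forall>T \<in> odeco_variety n d.
     (\<Sum>s<n. ucoord n d (unit_add y s) T * ucoord n d (unit_add v s) T
             - ucoord n d (unit_add w s) T * ucoord n d (unit_add z s) T) = 0"
proof
  fix T assume T: "T \<in> odeco_variety n d"
  let ?p = "\<lambda>T. \<Sum>s<n. ucoord n d (unit_add y s) T * ucoord n d (unit_add v s) T
                      - ucoord n d (unit_add w s) T * ucoord n d (unit_add z s) T"
  have "?p X = 0" if odeco: "X \<in> odeco_tensors n d" for X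
  proof -
    obtain lam b where X: "X = odeco_tensor n d lam b" and b: "orthonormal_basis n b"
      using odeco by (auto simp: odeco_tensors_def)
    have "(\<Prod>j<n. b i j ^ (y j + v j)) = (\<Prod>j<n. b i j ^ (w j + z j))" for i
      using assms(7) by (intro prod.cong) (auto simp: add.commute)
    then show ?thesis
      using assms(2-6) by (simp add: X sum_subtractf sum_ucoord_unit_add_odeco_tensor[OF b])
  qed
  moreover have "?p \<in> poly_fun"
    by (intro poly_fun_sum poly_fun_diff pf_mult poly_fun_ucoord)
  ultimately show "?p T = 0"
    using T zariski_closure_vanishing unfolding odeco_variety_def by blast
qed

end
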